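(* Let $\sigma$ be a two-qubit density matrix, $U$ a single-qubit unitary, and $R>0$, $T>0$. Consider the following test round. The client chooses $d\in\{0,1\}$, $\theta\in\Theta$ and $r\in\{0,1\}$ uniformly and independently. A dummy qubit in state $|d\rangle$ and a trap qubit in state $|+_\theta\rangle$ are each transmitted to the server through the rotated teleportation channel $\Lambda_{\sigma,U}$ (each using its own copy of $\sigma$). The entangled states are delivered at random times whose inter-delivery times are independent and identically distributed; let $\Delta t$ be the time between the delivery of the two qubits, with $\mathbb{E}[\Delta t]=1/R$, and $\Delta t$ independent of $(d,\theta,r)$. The qubit delivered first (either one) is stored during time $\Delta t$ in a depolarizing memory with coherence time $T$, i.e. it undergoes $\rho\mapsto p\rho+(1-p)\mathbf 1/2$ with $p=e^{-\Delta t/T}$. All local operations are noiseless and instantaneous. The server then applies a controlled-$Z$ gate to the two qubits and measures the trap qubit in the basis $\{|+_\delta\rangle,|-_\delta\rangle\}$ with $\delta=\theta+r\pi$ (outcome $0$ for $|+_\delta\rangle$, $1$ for $|-_\delta\rangle$); the round fails if the outcome differs from $d\oplus r$. Let $q$ be the expected failure probability (averaged over $d,\theta,r,\Delta t$ and the measurement). Define $$\bar F_{\mathrm{dummy}}=\tfrac12\big(\langle 0|\Lambda_{\sigma,U}(|0\rangle\langle0|)|0\rangle+\langle 1|\Lambda_{\sigma,U}(|1\rangle\langle1|)|1\rangle\big),\qquad \bar F_{\mathrm{trap}}=\tfrac18\sum_{\theta\in\Theta}\langle+_\theta|\Lambda_{\sigma,U}(|+_\theta\rangle\langle+_\theta|)|+_\theta\rangle.$$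 If $\bar F_{\mathrm{dummy}}(1-\bar F_{\mathrm{trap}})+\bar F_{\mathrm{trap}}(1-\bar F_{\mathrm{dummy}})\le\frac12$, then $$q\le e^{-\frac{1}{RT}}\Big[\bar F_{\mathrm{dummy}}(1-\bar F_{\mathrm{trap}})+\bar F_{\mathrm{trap}}(1-\bar F_{\mathrm{dummy}})\Big]+\tfrac12\big(1-e^{-\frac{1}{RT}}\big).$$
   Context: $\Theta=\{i\pi/4\}_{0\le i\le7}$ and $|\pm_\theta\rangle=\frac1{\sqrt2}(|0\rangle\pm e^{i\theta}|1\rangle)$. Let $|\Phi^+\rangle=\frac1{\sqrt2}(|00\rangle+|11\rangle)$ and $|\Phi_{ij}\rangle=(X^iZ^j\otimes\mathbf 1)|\Phi^+\rangle$ for $i,j\in\{0,1\}$. For a two-qubit state $\sigma$ on registers $S$ (sender) and $R$ (receiver), the teleportation channel is the single-qubit channel $\Lambda_\sigma(\rho)=\sum_{i,j\in\{0,1\}}X^iZ^j\,\langle\Phi_{ij}|_{IS}(\rho_I\otimes\sigma_{SR})|\Phi_{ij}\rangle_{IS}\,(X^iZ^j)^\dagger$ (Bell measurement on the input register $I$ and $S$, followed by Pauli correction on $R$). For a single-qubit unitary $U$, the rotated teleportation channel is $\Lambda_{\sigma,U}(\rho)=U^\dagger\Lambda_\sigma(U\rho U^\dagger)U$. *)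

theory Defs
  imports "HOL-Probability.Probability"
begin

text \<open>A qubit is indexed by bool (False = |0>, True = |1>); two-qubit objects
  are indexed by bool \<times> bool (first component = first tensor factor).\<close>

type_synonym 'i qvec = "'i \<Rightarrow> complex"
type_synonym 'i qop = "'i \<Rightarrow> 'i \<Rightarrow> complex"

definition mmul :: "('i::finite) qop \<Rightarrow> 'i qop \<Rightarrow> 'i qop" where
  "mmul A B = (\<lambda>i j. \<Sum>k\<in>UNIV. A i k * B k j)"

definition adj :: "'i qop \<Rightarrow> 'i qop" where
  "adj A = (\<lambda>i j. cnj (A j i))"

definition idop :: "'i qop" where
  "idop = (\<lambda>i j. if i = j then 1 else 0)"

definition apply_op :: "('i::finite) qop \<Rightarrow> 'i qvec \<Rightarrow> 'i qvec" where
  "apply_op A v = (\<lambda>i. \<Sum>j\<in>UNIV. A i j * v j)"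

definition ket_bra :: "'i qvec \<Rightarrow> 'i qvec \<Rightarrow> 'i qop" where
  "ket_bra u v = (\<lambda>i j. u i * cnj (v j))"

definition expval :: "('i::finite) qvec \<Rightarrow> 'i qop \<Rightarrow> complex" where
  "expval v A = (\<Sum>i\<in>UNIV. \<Sum>j\<in>UNIV. cnj (v i) * A i j * v j)"

definition trace :: "('i::finite) qop \<Rightarrow> complex" where
  "trace A = (\<Sum>i\<in>UNIV. A i i)"

definition tensor :: "'i qop \<Rightarrow> 'j qop \<Rightarrow> ('i \<times> 'j) qop" where
  "tensor A B = (\<lambda>(i1, i2) (j1, j2). A i1 j1 * B i2 j2)"

definition hermitian :: "'i qop \<Rightarrow> bool" where
  "hermitian A \<longleftrightarrow> adj A = A"

definition positive_semidef :: "('i::finite) qop \<Rightarrow> bool" where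
  "positive_semidef A \<longleftrightarrow> hermitian A \<and> (\<forall>v. 0 \<le> Re (expval v A))"

definition density :: "('i::finite) qop \<Rightarrow> bool" where
  "density A \<longleftrightarrow> positive_semidef A \<and> trace A = 1"

definition unitary_op :: "('i::finite) qop \<Rightarrow> bool" where
  "unitary_op U \<longleftrightarrow> mmul (adj U) U = idop"

definition ket :: "bool \<Rightarrow> bool qvec" where
  "ket b = (\<lambda>i. if i = b then 1 else 0)"

text \<open>pm s th = |+_th> if s = False, |-_th> if s = True.\<close>
definition pm :: "bool \<Rightarrow> real \<Rightarrow> bool qvec" where
  "pm s th = (\<lambda>i. if i then (if s then -1 else 1) * cis th / complex_of_real (sqrt 2)
                   else 1 / complex_of_real (sqrt 2))"

definition pauliX :: "bool qop" where
  "pauliX = (\<lambda>i j. if i \<noteq> j then 1 else 0)"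

definition pauliZ :: "bool qop" where
  "pauliZ = (\<lambda>i j. if i = j then (if i then -1 else 1) else 0)"

definition pauli :: "bool \<Rightarrow> bool \<Rightarrow> bool qop" where
  "pauli a b = mmul (if a then pauliX else idop) (if b then pauliZ else idop)"

definition PhiPlus :: "(bool \<times> bool) qvec" where
  "PhiPlus = (\<lambda>(a, b). if a = b then 1 / complex_of_real (sqrt 2) else 0)"

definition Phi :: "bool \<Rightarrow> bool \<Rightarrow> (bool \<times> bool) qvec" where
  "Phi a b = apply_op (tensor (pauli a b) idop) PhiPlus"

text \<open>(<phi|_{IS} \<otimes> 1_R)(rho_I \<otimes> sigma_SR)(|phi>_{IS} \<otimes> 1_R), an operator on R.\<close>
definition bell_proj :: "(bool \<times> bool) qvec \<Rightarrow> bool qop \<Rightarrow> (bool \<times> bool) qop \<Rightarrow> bool qop" where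
  "bell_proj phi rho sg = (\<lambda>r r'.
     \<Sum>a\<in>UNIV. \<Sum>b\<in>UNIV. \<Sum>a'\<in>UNIV. \<Sum>b'\<in>UNIV.
       cnj (phi (a, b)) * rho a a' * sg (b, r) (b', r') * phi (a', b'))"

definition teleport :: "(bool \<times> bool) qop \<Rightarrow> bool qop \<Rightarrow> bool qop" where
  "teleport sg rho = (\<lambda>r r'. \<Sum>a\<in>UNIV. \<Sum>b\<in>UNIV.
     mmul (mmul (pauli a b) (bell_proj (Phi a b) rho sg)) (adj (pauli a b)) r r')"

definition rot_teleport :: "(bool \<times> bool) qop \<Rightarrow> bool qop \<Rightarrow> bool qop \<Rightarrow> bool qop" where
  "rot_teleport sg U rho = mmul (mmul (adj U) (teleport sg (mmul (mmul U rho) (adj U)))) U"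

definition depolarize :: "real \<Rightarrow> bool qop \<Rightarrow> bool qop" where
  "depolarize p rho = (\<lambda>i j. complex_of_real p * rho i j + complex_of_real (1 - p) * idop i j / 2)"

definition CZ :: "(bool \<times> bool) qop" where
  "CZ = (\<lambda>(a, b) (a', b'). if (a, b) = (a', b') then (if a \<and> b then -1 else 1) else 0)"

definition Theta :: "nat \<Rightarrow> real" where
  "Theta k = real k * pi / 4"

text \<open>Failure probability of the test round for a fixed storage time, with
  depolarizing parameter p applied to the qubit stored first
  (dummy_first = True: dummy qubit stored; False: trap qubit stored).
  Tensor order: (dummy, trap).
  The round fails iff outcome (True = |-_delta>) differs from d xor r,
  i.e. iff the outcome is (d = r).\<close>
definition fail_prob :: "(bool \<times> bool) qop \<Rightarrow> bool qop \<Rightarrow> real \<Rightarrow> bool \<Rightarrow> real" where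
  "fail_prob sg U p dummy_first = (1 / 32) *
     (\<Sum>d\<in>(UNIV::bool set). \<Sum>k<8. \<Sum>r\<in>(UNIV::bool set).
        let th = Theta k;
            delta = th + (if r then pi else 0);
            rho_d = rot_teleport sg U (ket_bra (ket d) (ket d));
            rho_t = rot_teleport sg U (ket_bra (pm False th) (pm False th));
            st = tensor (if dummy_first then depolarize p rho_d else rho_d)
                        (if dummy_first then rho_t else depolarize p rho_t);
            st' = mmul (mmul CZ st) (adj CZ);
            v = pm (d = r) delta
        in Re (trace (mmul (tensor idop (ket_bra v v)) st')))"

definition F_dummy :: "(bool \<times> bool) qop \<Rightarrow> bool qop \<Rightarrow> real" where
  "F_dummy sg U = (1 / 2) *
     (Re (expval (ket False) (rot_teleport sg U (ket_bra (ket False) (ket False)))) +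
      Re (expval (ket True) (rot_teleport sg U (ket_bra (ket True) (ket True)))))"

definition F_trap :: "(bool \<times> bool) qop \<Rightarrow> bool qop \<Rightarrow> real" where
  "F_trap sg U = (1 / 8) * (\<Sum>k<8.
     Re (expval (pm False (Theta k)) (rot_teleport sg U (ket_bra (pm False (Theta k)) (pm False (Theta k))))))"

end

(* Teleportation preserves trace and hermiticity, so every qubit entering the test round is a
   hermitian unit-trace operator.  After the CZ gate, the trap measurement reads off the parity
   of the errors on the two qubits, so without storage noise the round fails with probability
   Q = F_dummy (1 - F_trap) + F_trap (1 - F_dummy).  The failure probability is affine in the
   state of the stored qubit, hence depolarizing it with parameter p gives exactly
   p Q + (1 - p) / 2.  Finally Jensen's inequality for exp gives E[exp (-dt / T)] >= exp (-1 / (R T)),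
   and since Q <= 1/2 the failure probability decreases in p. *)

theory Submission
  imports Defs
begin

lemma sum_UNIV_bool: "(\<Sum>x\<in>UNIV. f x) = f False + f True"
  by (simp add: UNIV_bool)

lemma UNIV_bool_prod: "(UNIV :: (bool \<times> bool) set) = {(False, False), (False, True), (True, False), (True, True)}"
  by auto

lemma sum_UNIV_bool_prod:
  "(\<Sum>x\<in>UNIV. f x) = f (False, False) + f (False, True) + f (True, False) + f (True, True)"
  by (simp add: UNIV_bool_prod add.assoc)

lemma adj_adj [simp]: "adj (adj A) = A"
  by (simp add: adj_def)

lemma adj_mmul: "adj (mmul A B) = mmul (adj B) (adj A)"
  by (simp add: adj_def mmul_def fun_eq_iff mult.commute)

lemma mmul_assoc: "mmul (mmul A B) C = mmul A (mmul B C)"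
  unfolding mmul_def fun_eq_iff
  by (simp add: sum_distrib_left sum_distrib_right mult.assoc, subst sum.swap, simp)

lemma mmul_idop [simp]: "mmul idop A = A" "mmul A idop = A"
  by (simp_all add: mmul_def idop_def fun_eq_iff if_distrib if_distribR cong: if_cong)

lemma trace_mmul_commute: "trace (mmul A B) = trace (mmul B A)"
  unfolding trace_def mmul_def by (subst sum.swap) (simp add: mult.commute)

lemma mmul_left_inverse_imp_right_inverse:
  fixes A B :: "('i::finite) qop"
  assumes "mmul A B = idop"
  shows "mmul B A = idop"
proof -
  define M :: "'i qop \<Rightarrow> complex^'i^'i" where "M C = (\<chi> i j. C i j)" for C
  have M_mmul: "M (mmul C D) = M C ** M D" for C D
    by (simp add: M_def mmul_def matrix_matrix_mult_def)
  have M_idop: "M idop = mat 1"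
    by (simp add: M_def idop_def mat_def)
  have M_inj: "M C = M D \<Longrightarrow> C = D" for C D
    by (simp add: M_def vec_eq_iff fun_eq_iff)
  have "M A ** M B = mat 1"
    using assms by (simp add: M_idop flip: M_mmul)
  then have "M (mmul B A) = M idop"
    by (simp add: M_mmul M_idop matrix_left_right_inverse)
  then show ?thesis
    by (rule M_inj)
qed

lemma unitary_op_right_inverse: "unitary_op U \<Longrightarrow> mmul U (adj U) = idop"
  by (simp add: unitary_op_def mmul_left_inverse_imp_right_inverse)

lemma trace_unitary_conj: "mmul (adj P) P = idop \<Longrightarrow> trace (mmul (mmul P B) (adj P)) = trace B"
  by (metis mmul_assoc trace_mmul_commute mmul_idop(1))

lemma adj_conj: "adj (mmul (mmul P B) (adj P)) = mmul (mmul P (adj B)) (adj P)"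
  by (simp add: adj_mmul mmul_assoc)

lemma hermitian_conj: "hermitian B \<Longrightarrow> hermitian (mmul (mmul P B) (adj P))"
  by (simp add: hermitian_def adj_conj)

lemma hermitian_ket_bra: "hermitian (ket_bra u u)"
  by (simp add: hermitian_def adj_def ket_bra_def fun_eq_iff mult.commute)

lemma cnj_expval: "cnj (expval v B) = expval v (adj B)"
  unfolding expval_def adj_def by (subst sum.swap) (simp add: mult.commute mult.left_commute)

lemma expval_real: "hermitian B \<Longrightarrow> expval v B = of_real (Re (expval v B))"
  by (metis cnj_expval hermitian_def Reals_cnj_iff complex_is_Real_iff of_real_Re)

definition inv_sqrt2 :: complex where
  "inv_sqrt2 = 1 / complex_of_real (sqrt 2)"

lemma inv_sqrt2_sq: "inv_sqrt2 * inv_sqrt2 = 1 / 2"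
  by (simp add: inv_sqrt2_def flip: of_real_mult)

lemma inv_sqrt2_sq_mult: "inv_sqrt2 * (inv_sqrt2 * x) = x / 2"
  by (simp add: mult.assoc[symmetric] inv_sqrt2_sq)

lemma cnj_inv_sqrt2 [simp]: "cnj inv_sqrt2 = inv_sqrt2"
  by (simp add: inv_sqrt2_def)

lemma Phi_apply:
  "Phi a b (x, y) = (if x = (y \<noteq> a) then (if b \<and> y then - inv_sqrt2 else inv_sqrt2) else 0)"
  by (cases a; cases b; cases x; cases y)
    (simp_all add: inv_sqrt2_def Phi_def apply_op_def tensor_def pauli_def mmul_def pauliX_def
      pauliZ_def idop_def PhiPlus_def sum_UNIV_bool_prod sum_UNIV_bool)

lemma sum_bell_proj:
  "(\<Sum>a\<in>UNIV. \<Sum>b\<in>UNIV. bell_proj (Phi a b) rho sg r r') = trace rho * (\<Sum>s\<in>UNIV. sg (s, r) (s, r'))"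
  unfolding bell_proj_def trace_def
  by (simp add: sum_UNIV_bool Phi_apply algebra_simps inv_sqrt2_sq inv_sqrt2_sq_mult)

lemma pauli_unitary: "unitary_op (pauli a b)"
  by (cases a; cases b)
    (auto simp: unitary_op_def fun_eq_iff pauli_def mmul_def adj_def idop_def pauliX_def pauliZ_def
      sum_UNIV_bool)

lemma trace_teleport: "trace (teleport sg rho) = trace rho * trace sg"
proof -
  have "trace (teleport sg rho)
      = (\<Sum>a\<in>UNIV. \<Sum>b\<in>UNIV. trace (mmul (mmul (pauli a b) (bell_proj (Phi a b) rho sg)) (adj (pauli a b))))"
    unfolding trace_def teleport_def by (simp add: sum_UNIV_bool)
  also have "\<dots> = (\<Sum>a\<in>UNIV. \<Sum>b\<in>UNIV. trace (bell_proj (Phi a b) rho sg))"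
    using pauli_unitary by (simp add: trace_unitary_conj unitary_op_def)
  also have "\<dots> = (\<Sum>r\<in>UNIV. \<Sum>a\<in>UNIV. \<Sum>b\<in>UNIV. bell_proj (Phi a b) rho sg r r)"
    unfolding trace_def by (simp add: sum_UNIV_bool)
  also have "\<dots> = (\<Sum>r\<in>UNIV. trace rho * (\<Sum>s\<in>UNIV. sg (s, r) (s, r)))"
    by (simp add: sum_bell_proj)
  also have "\<dots> = trace rho * trace sg"
    by (simp add: trace_def sum_UNIV_bool sum_UNIV_bool_prod algebra_simps)
  finally show ?thesis .
qed

lemma adj_bell_proj: "adj (bell_proj phi rho sg) = bell_proj phi (adj rho) (adj sg)"
  by (simp add: adj_def bell_proj_def fun_eq_iff sum_UNIV_bool algebra_simps)

lemma adj_teleport: "adj (teleport sg rho) = teleport (adj sg) (adj rho)"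
proof -
  have "adj (teleport sg rho) r r'
      = (\<Sum>a\<in>UNIV. \<Sum>b\<in>UNIV. adj (mmul (mmul (pauli a b) (bell_proj (Phi a b) rho sg)) (adj (pauli a b))) r r')"
    for r r'
    by (simp add: teleport_def adj_def)
  then show ?thesis
    by (simp add: fun_eq_iff adj_conj adj_bell_proj teleport_def)
qed

lemma hermitian_teleport: "hermitian sg \<Longrightarrow> hermitian rho \<Longrightarrow> hermitian (teleport sg rho)"
  by (simp add: hermitian_def adj_teleport)

lemma hermitian_rot_teleport: "hermitian sg \<Longrightarrow> hermitian rho \<Longrightarrow> hermitian (rot_teleport sg U rho)"
  using hermitian_conj[of _ "adj U"] by (simp add: rot_teleport_def hermitian_teleport hermitian_conj)

lemma trace_rot_teleport: "unitary_op U \<Longrightarrow> trace (rot_teleport sg U rho) = trace rho * trace sg"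
  using trace_unitary_conj[of "adj U"] trace_unitary_conj[of U]
  by (simp add: rot_teleport_def trace_teleport unitary_op_right_inverse unitary_op_def)

lemma pm_apply: "pm s th = (\<lambda>i. if i then (if s then -1 else 1) * cis th * inv_sqrt2 else inv_sqrt2)"
  by (simp add: pm_def inv_sqrt2_def fun_eq_iff)

lemma pm_add_pi: "pm s (th + pi) = pm (\<not> s) th"
  by (simp add: pm_def fun_eq_iff cis.ctr complex_eq_iff)

lemma pauliZ_pm: "apply_op pauliZ (pm s th) = pm (\<not> s) th"
  by (simp add: pm_def apply_op_def pauliZ_def fun_eq_iff sum_UNIV_bool)

lemma cis_mult_cnj: "cis t * cnj (cis t) = 1"
  by (simp add: cis_cnj cis_mult)

lemma trace_ket_bra_ket: "trace (ket_bra (ket b) (ket b)) = 1"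
  by (cases b) (simp_all add: trace_def ket_bra_def ket_def sum_UNIV_bool)

lemma trace_ket_bra_pm: "trace (ket_bra (pm s th) (pm s th)) = 1"
  by (cases s) (simp_all add: trace_def ket_bra_def pm_apply sum_UNIV_bool algebra_simps
      inv_sqrt2_sq inv_sqrt2_sq_mult cis_mult_cnj)

lemma expval_ket: "expval (ket b) B = B b b"
  by (cases b) (simp_all add: expval_def ket_def sum_UNIV_bool)

lemma expval_pm_sum: "expval (pm False th) B + expval (pm True th) B = trace B"
  by (simp add: expval_def trace_def pm_apply sum_UNIV_bool algebra_simps
      inv_sqrt2_sq inv_sqrt2_sq_mult cis_mult_cnj)

lemma expval_depolarize: "expval v (depolarize p B) = p * expval v B + (1 - p) / 2 * expval v idop"
  by (simp add: expval_def depolarize_def sum_UNIV_bool algebra_simps)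

lemma expval_pm_idop: "expval (pm s th) idop = 1"
  by (cases s) (simp_all add: expval_def idop_def pm_apply sum_UNIV_bool algebra_simps
      inv_sqrt2_sq inv_sqrt2_sq_mult cis_mult_cnj)

lemma expval_pm_depolarize: "expval (pm s th) (depolarize p B) = p * expval (pm s th) B + (1 - p) / 2"
  by (simp add: expval_depolarize expval_pm_idop)

lemma depolarize_diag: "depolarize p B b b = p * B b b + (1 - p) / 2"
  by (simp add: depolarize_def idop_def)

lemma trace_depolarize: "trace (depolarize p B) = p * trace B + (1 - p)"
  by (simp add: trace_def depolarize_def idop_def sum_UNIV_bool algebra_simps)

lemma hermitian_depolarize: "hermitian B \<Longrightarrow> hermitian (depolarize p B)"
  by (simp add: hermitian_def depolarize_def adj_def idop_def fun_eq_iff)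

lemma trace_measure_after_CZ:
  "trace (mmul (tensor idop (ket_bra v v)) (mmul (mmul CZ (tensor A B)) (adj CZ)))
     = A False False * expval v B + A True True * expval (apply_op pauliZ v) B"
  by (simp add: trace_def mmul_def tensor_def ket_bra_def CZ_def adj_def expval_def apply_op_def
      pauliZ_def idop_def sum_UNIV_bool sum_UNIV_bool_prod algebra_simps)

definition xor_prob :: "real \<Rightarrow> real \<Rightarrow> real" where
  "xor_prob x y = x * (1 - y) + (1 - x) * y"

lemma average_xor_prob:
  "(1 / 32) * (\<Sum>d\<in>UNIV. \<Sum>k<(8::nat). \<Sum>r\<in>(UNIV :: bool set). xor_prob (a d) (f k))
     = xor_prob ((a False + a True) / 2) ((\<Sum>k<8. f k) / 8)"
proof -
  have affine: "(\<Sum>k<(8::nat). xor_prob x (f k)) = 8 * xor_prob x ((\<Sum>k<8. f k) / 8)" for x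
    by (simp add: xor_prob_def sum.distrib sum_subtractf flip: sum_distrib_left)
  show ?thesis
    by (simp only: sum_UNIV_bool sum.distrib affine) (simp add: xor_prob_def field_simps)
qed

lemma trap_failure_prob:
  fixes d r :: bool and th :: real
  assumes "hermitian A" "trace A = 1" "hermitian B" "trace B = 1"
  defines "v \<equiv> pm (d = r) (th + (if r then pi else 0))"
  shows "Re (trace (mmul (tensor idop (ket_bra v v)) (mmul (mmul CZ (tensor A B)) (adj CZ))))
           = xor_prob (Re (A d d)) (Re (expval (pm False th) B))"
proof -
  (* The angle shift r pi and the relabelling of the outcome by r cancel; CZ then swaps the
     trap basis states exactly when the dummy qubit is |1>. *)
  have v: "v = pm (\<not> d) th"
    by (cases r) (simp_all add: v_def pm_add_pi)
  obtain x where x: "A False False = of_real x"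
    using expval_real[OF assms(1), of "ket False"] by (auto simp: expval_ket)
  obtain y where y: "expval (pm False th) B = of_real y"
    using expval_real[OF assms(3)] by blast
  have x': "A True True = of_real (1 - x)"
    using assms(2) x by (simp add: trace_def sum_UNIV_bool algebra_simps)
  have y': "expval (pm True th) B = of_real (1 - y)"
    using expval_pm_sum[of th B] assms(4) y by (simp add: algebra_simps)
  show ?thesis
    unfolding v trace_measure_after_CZ pauliZ_pm
    by (cases d) (simp_all add: x y x' y' xor_prob_def algebra_simps)
qed

lemma average_xor_prob_depolarized:
  fixes p :: real and a :: "bool \<Rightarrow> real" and f :: "nat \<Rightarrow> real"
  defines "dep x \<equiv> p * x + (1 - p) / 2"
  shows "(1 / 32) * (\<Sum>d\<in>UNIV. \<Sum>k<8. \<Sum>r\<in>(UNIV :: bool set).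
             xor_prob (if dummy_first then dep (a d) else a d) (if dummy_first then f k else dep (f k)))
           = dep (xor_prob ((a False + a True) / 2) ((\<Sum>k<8. f k) / 8))"
proof -
  have "(dep (a False) + dep (a True)) / 2 = dep ((a False + a True) / 2)"
    and "(\<Sum>k<8. dep (f k)) / 8 = dep ((\<Sum>k<8. f k) / 8)"
    by (simp_all add: dep_def sum.distrib flip: sum_distrib_left) (simp_all add: field_simps)
  moreover have "xor_prob (dep x) y = dep (xor_prob x y)" and "xor_prob x (dep y) = dep (xor_prob x y)"
    for x y
    by (simp_all add: dep_def xor_prob_def field_simps)
  ultimately show ?thesis
    unfolding average_xor_prob by (cases dummy_first) simp_all
qed

lemma fail_prob_eq:
  assumes "density sg" and "unitary_op U"
  shows "fail_prob sg U p dummy_first = p * xor_prob (F_dummy sg U) (F_trap sg U) + (1 - p) / 2"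
proof -
  define rd where "rd d = rot_teleport sg U (ket_bra (ket d) (ket d))" for d
  define rt where "rt k = rot_teleport sg U (ket_bra (pm False (Theta k)) (pm False (Theta k)))" for k
  define a where "a d = Re (rd d d d)" for d
  define f where "f k = Re (expval (pm False (Theta k)) (rt k))" for k
  define dep where "dep x = p * x + (1 - p) / 2" for x
  have sg: "hermitian sg" "trace sg = 1"
    using assms(1) by (auto simp: density_def positive_semidef_def)
  have rd: "hermitian (rd d)" "trace (rd d) = 1" for d
    unfolding rd_def using assms(2) sg
    by (simp_all add: hermitian_rot_teleport hermitian_ket_bra trace_rot_teleport trace_ket_bra_ket)
  have rt: "hermitian (rt k)" "trace (rt k) = 1" for k
    unfolding rt_def using assms(2) sg
    by (simp_all add: hermitian_rot_teleport hermitian_ket_bra trace_rot_teleport trace_ket_bra_pm)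
  have round: "Re (trace (mmul (tensor idop (ket_bra (pm (d = r) (Theta k + (if r then pi else 0)))
                                                    (pm (d = r) (Theta k + (if r then pi else 0)))))
        (mmul (mmul CZ (tensor (if dummy_first then depolarize p (rd d) else rd d)
                               (if dummy_first then rt k else depolarize p (rt k)))) (adj CZ))))
      = xor_prob (if dummy_first then dep (a d) else a d) (if dummy_first then f k else dep (f k))"
    for d k r
  proof (cases dummy_first)
    case True
    have "Re (depolarize p (rd d) d d) = dep (a d)"
      by (simp add: depolarize_diag a_def dep_def)
    then show ?thesis
      using True trap_failure_prob[OF hermitian_depolarize[OF rd(1)] _ rt]
      by (simp add: trace_depolarize rd f_def)
  next
    case False
    have "Re (expval (pm False (Theta k)) (depolarize p (rt k))) = dep (f k)"
      by (simp add: expval_pm_depolarize f_def dep_def)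
    then show ?thesis
      using False trap_failure_prob[OF rd hermitian_depolarize[OF rt(1)]]
      by (simp add: trace_depolarize rt a_def)
  qed
  have "fail_prob sg U p dummy_first
      = (1 / 32) * (\<Sum>d\<in>UNIV. \<Sum>k<8. \<Sum>r\<in>(UNIV :: bool set).
           xor_prob (if dummy_first then dep (a d) else a d) (if dummy_first then f k else dep (f k)))"
    unfolding fail_prob_def Let_def rd_def[symmetric] rt_def[symmetric] by (simp only: round)
  also have "\<dots> = dep (xor_prob ((a False + a True) / 2) ((\<Sum>k<8. f k) / 8))"
    unfolding dep_def by (rule average_xor_prob_depolarized)
  also have "(a False + a True) / 2 = F_dummy sg U"
    by (simp add: F_dummy_def a_def rd_def expval_ket)
  also have "(\<Sum>k<8. f k) / 8 = F_trap sg U"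
    by (simp add: F_trap_def f_def rt_def)
  finally show ?thesis
    by (simp only: dep_def)
qed

lemma integrable_exp_neg_divide:
  fixes X :: "'a \<Rightarrow> real"
  assumes "finite_measure M" and "X \<in> borel_measurable M" and "AE \<omega> in M. 0 \<le> X \<omega>" and "T > 0"
  shows "integrable M (\<lambda>\<omega>. exp (- X \<omega> / T))"
proof -
  interpret finite_measure M by fact
  show ?thesis
  proof (rule Bochner_Integration.integrable_bound[where f = "\<lambda>_. 1"])
    show "AE \<omega> in M. norm (exp (- X \<omega> / T)) \<le> norm (1 :: real)"
      using assms(3) by eventually_elim (use assms(4) in auto)
  qed (use assms(2) in simp_all)
qed

lemma exp_neg_expectation_le:
  fixes X :: "'a \<Rightarrow> real"
  assumes "prob_space M" and "integrable M X" and "AE \<omega> in M. 0 \<le> X \<omega>" and "T > 0"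
  shows "exp (- (\<integral>\<omega>. X \<omega> \<partial>M) / T) \<le> (\<integral>\<omega>. exp (- X \<omega> / T) \<partial>M)"
proof -
  interpret prob_space M by fact
  have "exp (expectation (\<lambda>\<omega>. - X \<omega> / T)) \<le> expectation (\<lambda>\<omega>. exp (- X \<omega> / T))"
    using assms integrable_exp_neg_divide[of M X T]
    by (intro jensens_inequality[where I = UNIV]) (auto simp: exp_convex finite_measure_axioms)
  then show ?thesis
    by simp
qed

theorem lemma3:
  fixes sg :: "(bool \<times> bool) qop" and U :: "bool qop"
    and R T :: real and M :: "'a measure" and dt :: "'a \<Rightarrow> real" and dummy_first :: "'a \<Rightarrow> bool"
  assumes "density sg" and "unitary_op U" and "R > 0" and "T > 0"
    and "prob_space M"
    and "dt \<in> borel_measurable M"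
    and "dummy_first \<in> measurable M (count_space UNIV)"
    and "AE \<omega> in M. 0 \<le> dt \<omega>"
    and "integrable M dt"
    and "(\<integral>\<omega>. dt \<omega> \<partial>M) = 1 / R"
    and "F_dummy sg U * (1 - F_trap sg U) + F_trap sg U * (1 - F_dummy sg U) \<le> 1 / 2"
  shows "(\<integral>\<omega>. fail_prob sg U (exp (- dt \<omega> / T)) (dummy_first \<omega>) \<partial>M)
           \<le> exp (- 1 / (R * T)) * (F_dummy sg U * (1 - F_trap sg U) + F_trap sg U * (1 - F_dummy sg U))
             + 1 / 2 * (1 - exp (- 1 / (R * T)))"
proof -
  define Q where "Q = F_dummy sg U * (1 - F_trap sg U) + F_trap sg U * (1 - F_dummy sg U)"
  define E where "E = (\<integral>\<omega>. exp (- dt \<omega> / T) \<partial>M)"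
  have Q: "xor_prob (F_dummy sg U) (F_trap sg U) = Q"
    by (simp add: Q_def xor_prob_def algebra_simps)
  have jensen: "exp (- 1 / (R * T)) \<le> E"
    using exp_neg_expectation_le[OF assms(5,9,8,4)] assms(10) by (simp add: E_def)
  have fin: "finite_measure M"
    using assms(5) by (rule prob_space.axioms(1))
  have "fail_prob sg U (exp (- dt \<omega> / T)) (dummy_first \<omega>) = 1 / 2 - (1 / 2 - Q) * exp (- dt \<omega> / T)"
    for \<omega>
    by (simp add: fail_prob_eq[OF assms(1,2)] Q field_simps)
  then have "(\<integral>\<omega>. fail_prob sg U (exp (- dt \<omega> / T)) (dummy_first \<omega>) \<partial>M)
      = (\<integral>\<omega>. 1 / 2 - (1 / 2 - Q) * exp (- dt \<omega> / T) \<partial>M)"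
    by (simp only:)
  also have "\<dots> = 1 / 2 - (1 / 2 - Q) * E"
    using integrable_exp_neg_divide[OF fin assms(6,8,4)]
    by (simp add: E_def fin finite_measure.integrable_const prob_space.prob_space[OF assms(5)])
  also have "\<dots> \<le> 1 / 2 - (1 / 2 - Q) * exp (- 1 / (R * T))"
    using jensen assms(11) by (intro diff_left_mono mult_left_mono) (simp_all add: Q_def)
  also have "\<dots> = exp (- 1 / (R * T)) * Q + 1 / 2 * (1 - exp (- 1 / (R * T)))"
    by (simp add: algebra_simps)
  finally show ?thesis
    by (simp only: Q_def)
qed

end
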